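(* For every integer $q>1$ and every integer $n$, $$\left\lceil\frac{n}{q}\right\rceil=\sum_{i=0}^{q-1}\left\lceil\frac{n-i-\sum_{j=1}^{q-1}\left\lceil\frac{n-j}{q}\right\rceil}{q}\right\rceil,$$ i.e. $\lceil n/q\rceil$ formally satisfies the recursion $R(n)=\sum_{i=0}^{q-1}R\big(n-i-\sum_{j=1}^{q-1}R(n-j)\big)$. *)

theory Defs
  imports Complex_Main
begin

end

theory Submission
  imports Defs
begin

text \<open>By Hermite's identity, the \<open>q\<close> ceilings \<open>\<lceil>(m - i)/q\<rceil>\<close>, \<open>0 \<le> i < q\<close>, add up to \<open>m\<close>.
  Splitting off the term \<open>i = 0\<close>, the inner sum of the recursion equals \<open>n - \<lceil>n/q\<rceil>\<close>, so each
  outer argument is \<open>\<lceil>n/q\<rceil> - i\<close>, and Hermite's identity applied to \<open>m = \<lceil>n/q\<rceil>\<close> gives the claim.\<close>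

lemma sum_div_shifts:
  fixes q m :: int
  assumes "q > 0"
  shows "(\<Sum>i=0..q-1. (m + i) div q) = m"
proof -
  define S where "S m = (\<Sum>i=0..q-1. (m + i) div q)" for m
  have S_0: "S 0 = 0"
    unfolding S_def by (rule sum.neutral) simp
  have S_Suc: "S (m + 1) = S m + 1" for m
  proof -
    have "S (m + 1) = (\<Sum>i=1..q. (m + i) div q)"
      unfolding S_def by (rule sum.reindex_bij_witness[of _ "\<lambda>i. i - 1" "\<lambda>i. i + 1"]) (auto simp: ac_simps)
    also have "\<dots> = (\<Sum>i=0..q. (m + i) div q) - m div q"
    proof -
      have "{0..q} = insert 0 {1..q}" using assms by auto
      then show ?thesis by simp
    qed
    also have "\<dots> = S m + (m + q) div q - m div q"
    proof -
      have "{0..q} = insert q {0..q-1}" using assms by auto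
      then show ?thesis unfolding S_def by simp
    qed
    also have "(m + q) div q = m div q + 1"
      using assms by simp
    finally show ?thesis by simp
  qed
  show ?thesis
  proof (induction m rule: int_induct[where k = 0])
    case base
    show ?case using S_0 by (simp add: S_def)
  next
    case (step1 m)
    then show ?case using S_Suc[of m] by (simp add: S_def)
  next
    case (step2 m)
    then show ?case using S_Suc[of "m - 1"] by (simp add: S_def)
  qed
qed

lemma sum_ceiling_divide_shifts:
  fixes q m :: int
  assumes "q > 0"
  shows "(\<Sum>i=0..q-1. \<lceil>real_of_int (m - i) / real_of_int q\<rceil>) = m"
proof -
  have "(\<Sum>i=0..q-1. \<lceil>real_of_int (m - i) / real_of_int q\<rceil>) = - (\<Sum>i=0..q-1. (- m + i) div q)"
    unfolding ceiling_divide_eq_div sum_negf by (simp add: algebra_simps)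
  also have "\<dots> = m"
    using sum_div_shifts[OF assms, of "- m"] by simp
  finally show ?thesis .
qed

theorem theorem6:
  fixes q n :: int
  assumes "q > 1"
  shows "\<lceil>real_of_int n / real_of_int q\<rceil> =
    (\<Sum>i = 0..q - 1. \<lceil>real_of_int (n - i - (\<Sum>j = 1..q - 1. \<lceil>real_of_int (n - j) / real_of_int q\<rceil>)) / real_of_int q\<rceil>)"
proof -
  define c where "c = \<lceil>real_of_int n / real_of_int q\<rceil>"
  have "{0..q-1} = insert 0 {1..q-1}"
    using assms by auto
  then have inner: "(\<Sum>j = 1..q - 1. \<lceil>real_of_int (n - j) / real_of_int q\<rceil>) = n - c"
    using sum_ceiling_divide_shifts[of q n] assms by (simp add: c_def)
  have "n - i - (n - c) = c - i" for i
    by simp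
  then have "(\<Sum>i = 0..q - 1. \<lceil>real_of_int (n - i - (n - c)) / real_of_int q\<rceil>) = c"
    using sum_ceiling_divide_shifts[of q c] assms by simp
  then show ?thesis
    by (simp only: inner c_def)
qed

end
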